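(* Let $0\neq g\in\mathbb F_q[z]$, write $g=z^rg_0$ with $r\ge0$ and $g_0(0)\neq0$, and let $d_0=\deg g_0+m$ and $F_{g_0}(z)=P(z)g_0(z)g_0^*(z)$. Let $N\ge0$. Then $h\in V_N$ lies in the radical of the bilinear form $B_{g,N}(h,w)=B_A(gh,gw)$ on $V_N$ (i.e. $B_{g,N}(h,w)=0$ for all $w\in V_N$) if and only if \[ [z^j]\,F_{g_0}(z)h(z)=0\qquad\text{for all } d_0\le j\le d_0+N. \] In particular, $\dim\operatorname{rad}(B_{g,N})=\dim\operatorname{rad}(B_{g_0,N})$.
   Context: $q$ is an odd prime power; fix $m\ge0$, $c_0,\dots,c_m\in\mathbb F_q$ with $c_m\ne0$, $A(z)=c_0+\tfrac12\sum_{\ell=1}^m c_\ell(z^\ell+z^{-\ell})$ and $P(z)=z^mA(z)\in\mathbb F_q[z]$. $B_A(f,h)=\operatorname{CT}\,A(z)f(z)h(z^{-1})$ for polynomials $f,h$, where $\operatorname{CT}$ is the constant term of a Laurent polynomial. $V_N$ is the space of polynomials of degree $\le N$, $[z^j]F$ is the coefficient of $z^j$ in $F$, and for $g_0$ of degree $k_0$, $g_0^*(z)=z^{k_0}g_0(z^{-1})$. *)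

theory Defs
  imports "HOL-Computational_Algebra.Polynomial"
begin

text \<open>Coefficient of z^k (k an integer) in the Laurent polynomial
  A(z) = c_0 + 1/2 * sum_{l=1..m} c_l (z^l + z^-l).\<close>
definition Acoef :: "(nat \<Rightarrow> 'a::field) \<Rightarrow> nat \<Rightarrow> int \<Rightarrow> 'a" where
  "Acoef c m k = (if k = 0 then c 0
                  else if \<bar>k\<bar> \<le> int m then c (nat \<bar>k\<bar>) / 2 else 0)"

text \<open>P(z) = z^m A(z), a polynomial of degree at most 2m.\<close>
definition Ppoly :: "(nat \<Rightarrow> 'a::field) \<Rightarrow> nat \<Rightarrow> 'a poly" where
  "Ppoly c m = (\<Sum>k\<le>2*m. monom (Acoef c m (int k - int m)) k)"

text \<open>B_A(f,h) = CT A(z) f(z) h(z^-1): the term a_k f_i h_j z^(k+i-j) is constant iff k = j - i.\<close>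
definition BA :: "(nat \<Rightarrow> 'a::field) \<Rightarrow> nat \<Rightarrow> 'a poly \<Rightarrow> 'a poly \<Rightarrow> 'a" where
  "BA c m f h = (\<Sum>i\<le>degree f. \<Sum>j\<le>degree h.
                   Acoef c m (int j - int i) * coeff f i * coeff h j)"

definition VN :: "nat \<Rightarrow> 'a::zero poly set" where
  "VN N = {h. degree h \<le> N}"

definition radB :: "(nat \<Rightarrow> 'a::field) \<Rightarrow> nat \<Rightarrow> 'a poly \<Rightarrow> nat \<Rightarrow> 'a poly set" where
  "radB c m g N = {h \<in> VN N. \<forall>w \<in> VN N. BA c m (g * h) (g * w) = 0}"

end

theory Submission
  imports Defs
begin

text \<open>The constant term of A(z) f(z) h(1/z) is the coefficient of z^(m + deg h) in P f h*.
  Hence B_A(g h, g w) pairs the coefficients of w with the coefficients of P g g* h in degrees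
  deg g + m, ..., deg g + m + N, and h lies in the radical exactly when all of these vanish.
  A factor z^r of g is invisible to B_A, because (z^r w)* = w* and multiplication by z^r only
  shifts coefficients; so the radicals for g and g0 are the same set.\<close>

lemma coeff_Ppoly: "coeff (Ppoly c m) k = Acoef c m (int k - int m)"
  by (auto simp: Ppoly_def coeff_sum Acoef_def)

lemma Acoef_eq_0: "\<bar>k\<bar> > int m \<Longrightarrow> Acoef c m k = 0"
  by (auto simp: Acoef_def)

lemma coeff_Ppoly_mult:
  "coeff (Ppoly c m * f) (m + j) = (\<Sum>i\<le>degree f. Acoef c m (int j - int i) * coeff f i)"
proof -
  have "coeff (Ppoly c m * f) (m + j) = (\<Sum>i\<le>m + j. coeff f i * Acoef c m (int j - int i))"
    unfolding mult.commute[of "Ppoly c m"] coeff_mult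
    by (intro sum.cong refl) (simp add: coeff_Ppoly of_nat_diff)
  also have "\<dots> = (\<Sum>i\<le>max (m + j) (degree f). coeff f i * Acoef c m (int j - int i))"
    by (intro sum.mono_neutral_left) (auto simp: Acoef_eq_0)
  also have "\<dots> = (\<Sum>i\<le>degree f. coeff f i * Acoef c m (int j - int i))"
    by (intro sum.mono_neutral_right) (auto simp: coeff_eq_0)
  finally show ?thesis
    by (simp add: mult.commute)
qed

lemma coeff_mult_reflect_poly:
  fixes p q :: "'a::comm_semiring_0 poly"
  shows "coeff (p * reflect_poly q) (n + degree q) = (\<Sum>j\<le>degree q. coeff p (n + j) * coeff q j)"
proof -
  let ?t = "\<lambda>i. coeff p i * coeff (reflect_poly q) (n + degree q - i)"
  have "{..n + degree q} = {..<n} \<union> {n..n + degree q}"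
    by auto
  then have "coeff (p * reflect_poly q) (n + degree q) = sum ?t ({..<n} \<union> {n..n + degree q})"
    by (simp add: coeff_mult)
  also have "\<dots> = sum ?t {n..n + degree q}"
  proof -
    have "sum ?t {..<n} = 0"
      by (intro sum.neutral) (auto simp: coeff_reflect_poly)
    then show ?thesis
      by (subst sum.union_disjoint) auto
  qed
  also have "\<dots> = (\<Sum>j\<le>degree q. ?t (n + j))"
    using sum.shift_bounds_cl_nat_ivl[of ?t 0 n "degree q"]
    by (simp add: atMost_atLeast0 add.commute)
  also have "\<dots> = (\<Sum>j\<le>degree q. coeff p (n + j) * coeff q j)"
    by (intro sum.cong) (auto simp: coeff_reflect_poly)
  finally show ?thesis .
qed

lemma BA_eq_coeff: "BA c m f h = coeff (Ppoly c m * f * reflect_poly h) (m + degree h)"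
proof -
  have "BA c m f h = (\<Sum>j\<le>degree h. coeff (Ppoly c m * f) (m + j) * coeff h j)"
    unfolding BA_def coeff_Ppoly_mult sum_distrib_right by (rule sum.swap)
  then show ?thesis
    by (simp add: coeff_mult_reflect_poly)
qed

lemma reflect_poly_monom_1: "reflect_poly (monom 1 r) = 1"
  by (rule poly_eqI) (auto simp: coeff_reflect_poly degree_monom_eq coeff_monom)

lemma BA_monom_mult:
  "BA c m (monom 1 r * f) (monom 1 r * h) = BA c m f h"
proof (cases "h = 0")
  case False
  then have degree_shifted: "degree (monom 1 r * h) = r + degree h"
    by (simp add: degree_mult_eq degree_monom_eq)
  have shifted: "Ppoly c m * (monom 1 r * f) * reflect_poly (monom 1 r * h) =
      monom 1 r * (Ppoly c m * f * reflect_poly h)"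
    by (simp add: reflect_poly_mult reflect_poly_monom_1 ac_simps)
  show ?thesis
    unfolding BA_eq_coeff degree_shifted shifted by (simp add: coeff_monom_mult)
qed (simp add: BA_eq_coeff)

lemma BA_mult_eq_sum:
  assumes "degree w \<le> N"
  shows "BA c m (g * h) (g * w) =
    (\<Sum>j\<le>N. coeff (Ppoly c m * g * reflect_poly g * h) (degree g + m + j) * coeff w j)"
proof (cases "g = 0 \<or> w = 0")
  case False
  then have "BA c m (g * h) (g * w) =
      coeff (Ppoly c m * g * reflect_poly g * h * reflect_poly w) (degree g + m + degree w)"
    by (simp add: BA_eq_coeff degree_mult_eq reflect_poly_mult ac_simps)
  also have "\<dots> = (\<Sum>j\<le>N. coeff (Ppoly c m * g * reflect_poly g * h) (degree g + m + j) * coeff w j)"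
    unfolding coeff_mult_reflect_poly
    by (intro sum.mono_neutral_left) (use assms in \<open>auto simp: coeff_eq_0\<close>)
  finally show ?thesis .
qed (auto simp: BA_eq_coeff)

lemma sum_coeff_vanishes_on_VN_iff:
  fixes a :: "nat \<Rightarrow> 'a::comm_semiring_1"
  shows "(\<forall>w \<in> VN N. (\<Sum>j\<le>N. a j * coeff w j) = 0) \<longleftrightarrow> (\<forall>j\<le>N. a j = 0)"
proof
  assume vanish: "\<forall>w \<in> VN N. (\<Sum>j\<le>N. a j * coeff w j) = 0"
  show "\<forall>j\<le>N. a j = 0"
  proof (intro allI impI)
    fix j assume "j \<le> N"
    then have "monom 1 j \<in> VN N"
      by (simp add: VN_def order.trans[OF degree_monom_le])
    with vanish \<open>j \<le> N\<close> show "a j = 0"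
      by (force simp: coeff_monom if_distrib cong: if_cong)
  qed
qed simp

lemma mem_radB_iff:
  "h \<in> radB c m g N \<longleftrightarrow>
     h \<in> VN N \<and> (\<forall>j\<le>N. coeff (Ppoly c m * g * reflect_poly g * h) (degree g + m + j) = 0)"
proof -
  have "(\<forall>w \<in> VN N. BA c m (g * h) (g * w) = 0) \<longleftrightarrow>
      (\<forall>w \<in> VN N. (\<Sum>j\<le>N. coeff (Ppoly c m * g * reflect_poly g * h) (degree g + m + j) * coeff w j) = 0)"
    by (intro ball_cong refl) (simp add: VN_def BA_mult_eq_sum)
  then show ?thesis
    by (simp add: radB_def sum_coeff_vanishes_on_VN_iff)
qed

lemma radB_monom_mult: "radB c m (monom 1 r * g) N = radB c m g N"
  by (simp add: radB_def mult.assoc BA_monom_mult)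

lemma all_le_shift_iff: "(\<forall>j\<le>N. P (a + j)) \<longleftrightarrow> (\<forall>j. a \<le> j \<and> j \<le> a + N \<longrightarrow> P (j::nat))"
proof
  assume "\<forall>j\<le>N. P (a + j)"
  then show "\<forall>j. a \<le> j \<and> j \<le> a + N \<longrightarrow> P j"
    by (metis add_le_cancel_left le_add_diff_inverse)
qed simp

theorem lemma5p1:
  fixes c :: "nat \<Rightarrow> 'a::{field,finite}" and m :: nat
    and g g0 :: "'a poly" and r N :: nat
  assumes q_odd: "odd (card (UNIV :: 'a set))"
    and cm: "c m \<noteq> 0"
    and g_nz: "g \<noteq> 0"
    and g_decomp: "g = monom 1 r * g0"
    and g0_0: "poly g0 0 \<noteq> 0"
  shows "(\<forall>h \<in> VN N. h \<in> radB c m g N \<longleftrightarrow>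
            (\<forall>j. degree g0 + m \<le> j \<and> j \<le> degree g0 + m + N \<longrightarrow>
                 coeff (Ppoly c m * g0 * reflect_poly g0 * h) j = 0))
         \<and> vector_space.dim smult (radB c m g N) = vector_space.dim smult (radB c m g0 N)"
proof -
  have radB_eq: "radB c m g N = radB c m g0 N"
    by (simp add: g_decomp radB_monom_mult)
  have "h \<in> radB c m g0 N \<longleftrightarrow>
      (\<forall>j. degree g0 + m \<le> j \<and> j \<le> degree g0 + m + N \<longrightarrow>
           coeff (Ppoly c m * g0 * reflect_poly g0 * h) j = 0)" if "h \<in> VN N" for h
    using that by (simp add: mem_radB_iff) (rule all_le_shift_iff)
  with radB_eq show ?thesis
    by simp
qed

end
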